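(* There is no $4$-$\gamma_t$-critical graph $G$ of order $\Delta(G)+4$ with $\Delta(G)\in\{3,5,7\}$ and $\delta(G)\ge 2$.
   Context: All graphs are finite and simple; $\Delta(G)$, $\delta(G)$ are maximum and minimum degree. A set $S\subseteq V(G)$ is a total dominating set if every vertex of $G$ is adjacent to some vertex of $S$; $\gamma_t(G)$ is the minimum size of such a set. A leaf is a vertex of degree one. A graph $G$ with no isolated vertex is $\gamma_t$-critical if for every vertex $v$ not adjacent to a leaf, $\gamma_t(G-v)<\gamma_t(G)$; it is $m$-$\gamma_t$-critical if moreover $\gamma_t(G)=m$. *)

theory Defs
  imports Main "HOL-Library.Extended_Nat"
begin

definition simple_graph :: "'a set \<Rightarrow> ('a \<Rightarrow> 'a \<Rightarrow> bool) \<Rightarrow> bool" where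
  "simple_graph V E \<longleftrightarrow> finite V \<and> (\<forall>u v. E u v \<longrightarrow> u \<in> V \<and> v \<in> V)
     \<and> (\<forall>u v. E u v \<longrightarrow> E v u) \<and> (\<forall>v. \<not> E v v)"

text \<open>Open neighbourhood of v inside vertex set V (so deleting vertices = shrinking V).\<close>
definition nbhd :: "'a set \<Rightarrow> ('a \<Rightarrow> 'a \<Rightarrow> bool) \<Rightarrow> 'a \<Rightarrow> 'a set" where
  "nbhd V E v = {u \<in> V. E v u}"

definition deg :: "'a set \<Rightarrow> ('a \<Rightarrow> 'a \<Rightarrow> bool) \<Rightarrow> 'a \<Rightarrow> nat" where
  "deg V E v = card (nbhd V E v)"

definition max_deg :: "'a set \<Rightarrow> ('a \<Rightarrow> 'a \<Rightarrow> bool) \<Rightarrow> nat" where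
  "max_deg V E = Max (deg V E ` V)"

definition min_deg :: "'a set \<Rightarrow> ('a \<Rightarrow> 'a \<Rightarrow> bool) \<Rightarrow> nat" where
  "min_deg V E = Min (deg V E ` V)"

definition no_isolated :: "'a set \<Rightarrow> ('a \<Rightarrow> 'a \<Rightarrow> bool) \<Rightarrow> bool" where
  "no_isolated V E \<longleftrightarrow> (\<forall>v\<in>V. nbhd V E v \<noteq> {})"

definition is_leaf :: "'a set \<Rightarrow> ('a \<Rightarrow> 'a \<Rightarrow> bool) \<Rightarrow> 'a \<Rightarrow> bool" where
  "is_leaf V E v \<longleftrightarrow> v \<in> V \<and> deg V E v = 1"

definition total_dom_set :: "'a set \<Rightarrow> ('a \<Rightarrow> 'a \<Rightarrow> bool) \<Rightarrow> 'a set \<Rightarrow> bool" where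
  "total_dom_set V E S \<longleftrightarrow> S \<subseteq> V \<and> (\<forall>v\<in>V. \<exists>s\<in>S. E v s)"

text \<open>Total domination number; it is \<infinity> when no total dominating set exists
  (i.e. when the graph has an isolated vertex).\<close>
definition gamma_t :: "'a set \<Rightarrow> ('a \<Rightarrow> 'a \<Rightarrow> bool) \<Rightarrow> enat" where
  "gamma_t V E = (INF S \<in> {S. total_dom_set V E S}. enat (card S))"

text \<open>G - v is the induced subgraph on V - {v} (same adjacency, smaller vertex set).\<close>
definition gamma_t_critical :: "'a set \<Rightarrow> ('a \<Rightarrow> 'a \<Rightarrow> bool) \<Rightarrow> bool" where
  "gamma_t_critical V E \<longleftrightarrow> no_isolated V E \<and>
     (\<forall>v\<in>V. (\<not> (\<exists>u. E v u \<and> is_leaf V E u)) \<longrightarrow> gamma_t (V - {v}) E < gamma_t V E)"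

definition m_gamma_t_critical :: "nat \<Rightarrow> 'a set \<Rightarrow> ('a \<Rightarrow> 'a \<Rightarrow> bool) \<Rightarrow> bool" where
  "m_gamma_t_critical m V E \<longleftrightarrow> gamma_t_critical V E \<and> gamma_t V E = enat m"

end

theory Submission
  imports Defs
begin

(* Let G be 4-gamma_t-critical with minimum degree at least 2.  Then G has no leaves, so
   every G - x has a total dominating set (TDS) of size at most 3, and as gamma_t(G) = 4
   such a set contains no neighbour of x (locale tc4_graph).  Take v of maximum degree D.
   Since |V| = D + 4, exactly three vertices a, b, c differ from v and are not adjacent
   to it.  They totally dominate G - v, which forces them to induce a path a b c whose
   middle vertex b has no neighbour in N(v), and every x in N(v) to be adjacent to
   exactly one of a and c.  Splitting N(v) into P and Q accordingly fixes the shape of G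
   (locale hub_config).  In it, the absence of a TDS of size 3 in G and the existence of
   one in each G - x, x in P, impose three conditions on the graph induced on P u Q
   (side_conditions), and symmetrically for (Q, P).  Finally, a finite check by the SAT
   solver shows that these conditions cannot hold in both directions when
   |P| + |Q| = D is 3, 5 or 7. *)

lemma gamma_t_le_card:
  assumes "total_dom_set V E S"
  shows "gamma_t V E \<le> enat (card S)"
  unfolding gamma_t_def using assms by (intro INF_lower) simp

lemma small_tds_of_gamma_t_less:
  assumes "gamma_t V E < enat m"
  shows "\<exists>S. total_dom_set V E S \<and> card S < m"
  using assms unfolding gamma_t_def by (auto simp: INF_less_iff)

lemma min_deg_le_deg:
  assumes "finite V" "u \<in> V"
  shows "min_deg V E \<le> deg V E u"
  unfolding min_deg_def using assms by (intro Min_le) auto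

lemma max_deg_attained:
  assumes "finite V" "V \<noteq> {}"
  obtains v where "v \<in> V" "deg V E v = max_deg V E"
proof -
  have "max_deg V E \<in> deg V E ` V"
    unfolding max_deg_def using assms by (intro Max_in) auto
  then show thesis using that by auto
qed

lemma critical_vertex_deletion:
  assumes crit: "m_gamma_t_critical m V E" and "finite V" and "min_deg V E \<ge> 2"
    and x: "x \<in> V"
  shows "\<exists>S. total_dom_set (V - {x}) E S \<and> card S < m"
proof -
  have no_leaf: "\<not> is_leaf V E u" for u
    using min_deg_le_deg[of V u E] assms(2,3) unfolding is_leaf_def by fastforce
  have "gamma_t (V - {x}) E < enat m"
    using crit x no_leaf unfolding m_gamma_t_critical_def gamma_t_critical_def by auto
  then show ?thesis by (rule small_tds_of_gamma_t_less)
qed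

lemma card_le_3_eq:
  assumes "finite S" "card S \<le> 3" "{p1, p2, p3} \<subseteq> S" "distinct [p1, p2, p3]"
  shows "S = {p1, p2, p3}"
  using card_seteq[OF assms(1,3)] assms(2,4) by simp

lemma triple_has_centre:
  fixes E :: "'a \<Rightarrow> 'a \<Rightarrow> bool"
  assumes sym: "\<And>u w. E u w = E w u" and irr: "\<And>u. \<not> E u u"
    and card: "card R = 3" and nbr: "\<forall>r\<in>R. \<exists>s\<in>R. E r s"
  obtains a b c where "R = {a, b, c}" "distinct [a, b, c]" "E b a" "E b c"
proof -
  obtain r1 r2 r3 where R: "R = {r1, r2, r3}" "distinct [r1, r2, r3]"
    using card card_3_iff[of R] by auto
  have "E r1 r2 \<or> E r1 r3" "E r2 r1 \<or> E r2 r3" "E r3 r1 \<or> E r3 r2"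
    using nbr irr unfolding R(1) by auto
  then consider "E r1 r2" "E r1 r3" | "E r2 r1" "E r2 r3" | "E r3 r1" "E r3 r2"
    using sym by blast
  then show thesis
  proof cases
    case 1
    with R show thesis by (intro that[of r2 r1 r3]) auto
  next
    case 2
    with R show thesis by (intro that[of r1 r2 r3]) auto
  next
    case 3
    with R show thesis by (intro that[of r1 r3 r2]) auto
  qed
qed

locale tc4_graph =
  fixes V :: "'a set" and E :: "'a \<Rightarrow> 'a \<Rightarrow> bool"
  assumes graph: "simple_graph V E"
    and no_small_tds: "\<And>S. total_dom_set V E S \<Longrightarrow> 4 \<le> card S"
    and vertex_deletion: "\<And>x. x \<in> V \<Longrightarrow> \<exists>S. total_dom_set (V - {x}) E S \<and> card S \<le> 3"
begin

lemma finite_V: "finite V"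
  and adj_in_V: "E u w \<Longrightarrow> u \<in> V \<and> w \<in> V"
  and adj_sym: "E u w = E w u"
  and adj_irrefl: "\<not> E u u"
  using graph unfolding simple_graph_def by blast+

lemma no_dominating_triple:
  assumes "{s1, s2, s3} \<subseteq> V" and "\<forall>u\<in>V. E u s1 \<or> E u s2 \<or> E u s3"
  shows False
proof -
  have "total_dom_set V E {s1, s2, s3}"
    using assms unfolding total_dom_set_def by auto
  moreover have "card {s1, s2, s3} \<le> 3"
    by (simp add: card_insert_if)
  ultimately show False
    using no_small_tds by fastforce
qed

text \<open>A small total dominating set of \<open>G - x\<close> contains no neighbour of \<open>x\<close>,
  for otherwise it would totally dominate \<open>G\<close>.\<close>
lemma deletion_set:
  assumes x: "x \<in> V"
  obtains S where "total_dom_set (V - {x}) E S" "card S \<le> 3" "\<forall>s\<in>S. \<not> E x s"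
proof -
  obtain S where S: "total_dom_set (V - {x}) E S" "card S \<le> 3"
    using vertex_deletion[OF x] by blast
  have "\<not> E x s" if "s \<in> S" for s
  proof
    assume "E x s"
    with S(1) that have "total_dom_set V E S"
      unfolding total_dom_set_def by blast
    with S(2) show False
      using no_small_tds by fastforce
  qed
  with S show thesis using that by blast
qed

lemma non_neighbours_dominate:
  assumes v: "v \<in> V"
  shows "\<forall>u\<in>V - {v}. \<exists>s\<in>V - insert v (nbhd V E v). E u s"
proof -
  obtain S where S: "total_dom_set (V - {v}) E S" "\<forall>s\<in>S. \<not> E v s"
    using deletion_set[OF v] by blast
  then have "S \<subseteq> V - insert v (nbhd V E v)"
    unfolding total_dom_set_def nbhd_def by auto
  with S(1) show ?thesis
    unfolding total_dom_set_def by blast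
qed

text \<open>A vertex \<open>r\<close> adjacent to every other vertex of \<open>V - N[v]\<close> has no neighbour in
  \<open>N(v)\<close>: otherwise \<open>{v, x, r}\<close> would totally dominate \<open>G\<close>.\<close>
lemma centre_misses_neighbourhood:
  assumes v: "v \<in> V" and r: "r \<in> V"
    and centre: "\<forall>u\<in>V - insert v (nbhd V E v). u = r \<or> E u r"
    and x: "x \<in> nbhd V E v"
  shows "\<not> E r x"
proof
  assume rx: "E r x"
  show False
  proof (rule no_dominating_triple)
    show "{v, x, r} \<subseteq> V" using v r x unfolding nbhd_def by auto
    show "\<forall>u\<in>V. E u v \<or> E u x \<or> E u r"
    proof
      fix u assume u: "u \<in> V"
      consider "u = v" | "u \<in> nbhd V E v" | "u \<in> V - insert v (nbhd V E v)" using u by blast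
      then show "E u v \<or> E u x \<or> E u r"
      proof cases
        case 1
        then show ?thesis using x unfolding nbhd_def by simp
      next
        case 2
        then show ?thesis using adj_sym unfolding nbhd_def by blast
      next
        case 3
        then have "u = r \<or> E u r" using centre by blast
        then show ?thesis using rx by auto
      qed
    qed
  qed
qed

text \<open>If \<open>V - N[v] = {a, b, c}\<close> with \<open>b\<close> adjacent to \<open>a\<close>, no neighbour \<open>x\<close> of \<open>v\<close> is
  adjacent to both \<open>a\<close> and \<open>c\<close>: otherwise \<open>{v, x, a}\<close> would totally dominate \<open>G\<close>.\<close>
lemma neighbour_misses_one_end:
  assumes v: "v \<in> V" and R: "V - insert v (nbhd V E v) = {a, b, c}"
    and ba: "E b a" and x: "x \<in> nbhd V E v" and xa: "E x a" and xc: "E x c"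
  shows False
proof (rule no_dominating_triple)
  show "{v, x, a} \<subseteq> V" using v x R unfolding nbhd_def by auto
  show "\<forall>u\<in>V. E u v \<or> E u x \<or> E u a"
  proof
    fix u assume "u \<in> V"
    then have "u = v \<or> u \<in> nbhd V E v \<or> u = a \<or> u = b \<or> u = c" using R by blast
    then show "E u v \<or> E u x \<or> E u a"
      using x ba xa xc adj_sym[of u v] adj_sym[of u x] unfolding nbhd_def by auto
  qed
qed

lemma non_neighbour_path:
  assumes v: "v \<in> V" and size: "card V = deg V E v + 4" and N_ne: "nbhd V E v \<noteq> {}"
  obtains a b c where "V - insert v (nbhd V E v) = {a, b, c}" "distinct [a, b, c]"
    "E b a" "E b c" "\<not> E a c"
    "\<And>x. x \<in> nbhd V E v \<Longrightarrow> \<not> E b x"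
    "\<And>x. x \<in> nbhd V E v \<Longrightarrow> E x a \<longleftrightarrow> \<not> E x c"
proof -
  define R where "R = V - insert v (nbhd V E v)"
  have N_sub: "nbhd V E v \<subseteq> V" and v_notin: "v \<notin> nbhd V E v"
    unfolding nbhd_def using adj_irrefl by auto
  have "card R = card V - card (insert v (nbhd V E v))"
    unfolding R_def using N_sub v finite_V by (intro card_Diff_subset) (auto intro: finite_subset)
  then have card_R: "card R = 3"
    using size v_notin finite_subset[OF N_sub finite_V] unfolding deg_def by simp
  have dom: "\<forall>u\<in>V - {v}. \<exists>s\<in>R. E u s"
    using non_neighbours_dominate[OF v] unfolding R_def .
  then have "\<forall>r\<in>R. \<exists>s\<in>R. E r s" unfolding R_def by blast
  then obtain a b c where R: "R = {a, b, c}" "distinct [a, b, c]" and ba: "E b a"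
    and bc: "E b c"
    using triple_has_centre[where E = E, OF adj_sym adj_irrefl card_R] by blast
  have R_abc: "V - insert v (nbhd V E v) = {a, b, c}" using R(1) unfolding R_def .
  have abc_V: "a \<in> V" "b \<in> V" "c \<in> V" using R(1) unfolding R_def by auto
  have "\<forall>u\<in>V - insert v (nbhd V E v). u = b \<or> E u b"
    unfolding R_abc using ba bc adj_sym[of a b] adj_sym[of c b] by simp
  then have b_misses: "\<not> E b x" if "x \<in> nbhd V E v" for x
    using centre_misses_neighbourhood[OF v abc_V(2) _ that] by blast
  have N_to_R: "E x a \<or> E x b \<or> E x c" if "x \<in> nbhd V E v" for x
    using dom that N_sub v_notin R(1) by blast
  have ac: "\<not> E a c"
  proof
    assume ac: "E a c"
    obtain x where x: "x \<in> nbhd V E v" using N_ne by blast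
    have "\<forall>u\<in>V - insert v (nbhd V E v). u = a \<or> E u a"
      unfolding R_abc using ac ba adj_sym[of b a] adj_sym[of c a] by simp
    then have "\<not> E a x" using centre_misses_neighbourhood[OF v abc_V(1) _ x] by blast
    have "\<forall>u\<in>V - insert v (nbhd V E v). u = c \<or> E u c"
      unfolding R_abc using ac bc adj_sym[of a c] adj_sym[of b c] by simp
    then have "\<not> E c x" using centre_misses_neighbourhood[OF v abc_V(3) _ x] by blast
    with \<open>\<not> E a x\<close> show False
      using N_to_R[OF x] b_misses[OF x] adj_sym[of x] by blast
  qed
  have exactly_one: "E x a \<longleftrightarrow> \<not> E x c" if "x \<in> nbhd V E v" for x
    using N_to_R[OF that] b_misses[OF that] adj_sym[of x b]
      neighbour_misses_one_end[OF v R_abc ba that] by blast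
  show thesis by (rule that[OF R_abc R(2) ba bc ac b_misses exactly_one])
qed

end

text \<open>Edges inside \<open>P \<union> Q\<close> are unconstrained.\<close>
locale hub_config = tc4_graph +
  fixes v a b c :: 'a and P Q :: "'a set"
  assumes vertices: "V = insert v (P \<union> Q \<union> {a, b, c})"
    and adj_v: "E v u \<longleftrightarrow> u \<in> P \<or> u \<in> Q"
    and adj_a: "E a u \<longleftrightarrow> u = b \<or> u \<in> P"
    and adj_c: "E c u \<longleftrightarrow> u = b \<or> u \<in> Q"
    and adj_b: "E b u \<longleftrightarrow> u = a \<or> u = c"
    and disjoint: "P \<inter> Q = {}"
    and hub_outside: "v \<notin> P \<union> Q" "a \<notin> P \<union> Q" "b \<notin> P \<union> Q" "c \<notin> P \<union> Q"
    and hub_distinct: "distinct [v, a, b, c]"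

lemma (in tc4_graph) hub_decomposition:
  assumes v: "v \<in> V" and size: "card V = deg V E v + 4" and N_ne: "nbhd V E v \<noteq> {}"
  obtains a b c P Q where "hub_config V E v a b c P Q" "P \<union> Q = nbhd V E v"
proof -
  define N where "N = nbhd V E v"
  obtain a b c where R: "V - insert v N = {a, b, c}" "distinct [a, b, c]"
    and ba: "E b a" and bc: "E b c" and ac: "\<not> E a c"
    and b_misses: "\<And>x. x \<in> N \<Longrightarrow> \<not> E b x"
    and exactly_one: "\<And>x. x \<in> N \<Longrightarrow> E x a \<longleftrightarrow> \<not> E x c"
    using non_neighbour_path[OF v size N_ne] unfolding N_def by blast
  define P where "P = {x \<in> N. E x a}"
  define Q where "Q = {x \<in> N. E x c}"
  have adj_N: "E v u \<longleftrightarrow> u \<in> N" for u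
    unfolding N_def nbhd_def using adj_in_V by blast
  have N_split: "P \<union> Q = N" "P \<inter> Q = {}"
    unfolding P_def Q_def using exactly_one by auto
  have outside: "v \<notin> N" "a \<notin> N" "b \<notin> N" "c \<notin> N"
    using R(1) adj_N adj_irrefl by auto
  have vertices: "V = insert v (P \<union> Q \<union> {a, b, c})"
    using R(1) N_split(1) v adj_N adj_in_V by blast
  have cases: "u = v \<or> u \<in> P \<or> u \<in> Q \<or> u = a \<or> u = b \<or> u = c" if "u \<in> V" for u
    using that vertices by blast
  have a_nbrs: "E a u \<longleftrightarrow> u = b \<or> u \<in> P" for u
  proof
    assume au: "E a u"
    then have "u \<noteq> v" "u \<noteq> a" "u \<noteq> c" "u \<notin> Q"
      using adj_N[of a] outside adj_irrefl ac exactly_one adj_sym[of a u] unfolding Q_def by auto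
    then show "u = b \<or> u \<in> P" using cases adj_in_V[OF au] by blast
  qed (use ba adj_sym[of a] P_def in auto)
  have c_nbrs: "E c u \<longleftrightarrow> u = b \<or> u \<in> Q" for u
  proof
    assume cu: "E c u"
    then have "u \<noteq> v" "u \<noteq> c" "u \<noteq> a" "u \<notin> P"
      using adj_N[of c] outside adj_irrefl ac exactly_one adj_sym[of c u] adj_sym[of a c]
      unfolding P_def by auto
    then show "u = b \<or> u \<in> Q" using cases adj_in_V[OF cu] by blast
  qed (use bc adj_sym[of c] Q_def in auto)
  have b_nbrs: "E b u \<longleftrightarrow> u = a \<or> u = c" for u
  proof
    assume bu: "E b u"
    then have "u \<noteq> v" "u \<noteq> b" "u \<notin> P" "u \<notin> Q"
      using adj_N[of b] outside adj_irrefl b_misses N_split(1) adj_sym[of b u] by auto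
    then show "u = a \<or> u = c" using cases adj_in_V[OF bu] by blast
  qed (use ba bc in auto)
  have "hub_config_axioms V E v a b c P Q"
    using vertices adj_N a_nbrs b_nbrs c_nbrs N_split outside R(2)
    by unfold_locales auto
  then have "hub_config V E v a b c P Q"
    by (intro hub_config.intro tc4_graph_axioms)
  then show thesis using that N_split unfolding N_def by blast
qed

definition misses_some :: "('a \<Rightarrow> 'a \<Rightarrow> bool) \<Rightarrow> 'a set \<Rightarrow> 'a set \<Rightarrow> bool" where
  "misses_some E P Q \<longleftrightarrow> (\<forall>z\<in>Q. \<exists>u\<in>P. \<not> E z u)"

definition edges_miss_common :: "('a \<Rightarrow> 'a \<Rightarrow> bool) \<Rightarrow> 'a set \<Rightarrow> 'a set \<Rightarrow> bool" where
  "edges_miss_common E P Q \<longleftrightarrow> (\<forall>y\<in>P. \<forall>z\<in>Q. E y z \<longrightarrow> (\<exists>u\<in>P. \<not> E y u \<and> \<not> E z u))"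

definition deletion_witnessed :: "('a \<Rightarrow> 'a \<Rightarrow> bool) \<Rightarrow> 'a set \<Rightarrow> 'a set \<Rightarrow> bool" where
  "deletion_witnessed E P Q \<longleftrightarrow> (\<forall>x\<in>P. \<exists>z\<in>Q. \<not> E x z \<and>
     ((\<forall>u\<in>P. u \<noteq> x \<longrightarrow> E z u) \<or>
      (\<exists>y\<in>P. y \<noteq> x \<and> \<not> E x y \<and> E y z \<and> (\<forall>u\<in>P. u \<noteq> x \<longrightarrow> E y u \<or> E z u))))"

definition side_conditions :: "('a \<Rightarrow> 'a \<Rightarrow> bool) \<Rightarrow> 'a set \<Rightarrow> 'a set \<Rightarrow> bool" where
  "side_conditions E P Q \<longleftrightarrow>
     misses_some E P Q \<and> edges_miss_common E P Q \<and> deletion_witnessed E P Q"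

context hub_config
begin

lemma vertex_cases: "u \<in> V \<Longrightarrow> u = v \<or> u \<in> P \<or> u \<in> Q \<or> u = a \<or> u = b \<or> u = c"
  using vertices by blast

text \<open>If \<open>z \<in> Q\<close> were adjacent to all of \<open>P\<close>, then \<open>{b, c, z}\<close> would totally
  dominate \<open>G\<close>.\<close>
lemma misses_some: "misses_some E P Q"
  unfolding misses_some_def
proof (intro ballI, rule ccontr)
  fix z assume z: "z \<in> Q" and "\<not> (\<exists>u\<in>P. \<not> E z u)"
  then have zP: "\<forall>u\<in>P. E z u" by blast
  show False
  proof (rule no_dominating_triple)
    show "{b, c, z} \<subseteq> V" using vertices z by auto
    show "\<forall>u\<in>V. E u b \<or> E u c \<or> E u z"
    proof
      fix u assume "u \<in> V"
      then show "E u b \<or> E u c \<or> E u z"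
        using vertex_cases zP z adj_v[of z] adj_a[of b] adj_c[of u] adj_b[of c]
          adj_sym[of u z] adj_sym[of u b] adj_sym[of u c] by auto
    qed
  qed
qed

text \<open>If all of \<open>P\<close> were dominated by an edge \<open>y z\<close> between \<open>P\<close> and \<open>Q\<close>, then
  \<open>{c, y, z}\<close> would totally dominate \<open>G\<close>.\<close>
lemma edges_miss_common: "edges_miss_common E P Q"
  unfolding edges_miss_common_def
proof (intro ballI impI, rule ccontr)
  fix y z assume y: "y \<in> P" and z: "z \<in> Q" and yz: "E y z"
    and "\<not> (\<exists>u\<in>P. \<not> E y u \<and> \<not> E z u)"
  then have cov: "\<forall>u\<in>P. E y u \<or> E z u" by blast
  show False
  proof (rule no_dominating_triple)
    show "{c, y, z} \<subseteq> V" using vertices y z by auto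
    show "\<forall>u\<in>V. E u c \<or> E u y \<or> E u z"
    proof
      fix u assume "u \<in> V"
      then show "E u c \<or> E u y \<or> E u z"
        using vertex_cases cov y z yz adj_v[of y] adj_a[of y] adj_c[of u] adj_c[of z] adj_b[of c]
          adj_sym[of u z] adj_sym[of u y] adj_sym[of u c] by auto
    qed
  qed
qed

text \<open>A small total dominating set of \<open>G - x\<close>, \<open>x \<in> P\<close>, avoiding \<open>N(x)\<close> must contain
  \<open>c\<close>, since \<open>b\<close> needs a neighbour in it and \<open>a\<close> is adjacent to \<open>x\<close>.\<close>
lemma deletion_set_basics:
  assumes x: "x \<in> P" and S: "total_dom_set (V - {x}) E S" "\<forall>s\<in>S. \<not> E x s"
  shows "c \<in> S" "v \<notin> S" "a \<notin> S" "finite S"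
proof -
  show v: "v \<notin> S" and a: "a \<notin> S"
    using x S(2) adj_v[of x] adj_a[of x] adj_sym[of x] by auto
  have "b \<in> V - {x}" using x vertices hub_outside by auto
  then obtain s where "s \<in> S" "E b s" using S(1) unfolding total_dom_set_def by blast
  then show "c \<in> S" using a adj_b by auto
  show "finite S" using S(1) finite_V finite_subset unfolding total_dom_set_def by blast
qed

lemma deletion_set_meeting_P:
  assumes x: "x \<in> P" and S: "total_dom_set (V - {x}) E S" "card S \<le> 3" "\<forall>s\<in>S. \<not> E x s"
    and y: "y \<in> S" "y \<in> P"
  obtains t where "t \<in> Q" "E y t" "S = {c, y, t}"
proof -
  note basics = deletion_set_basics[OF x S(1,3)]
  have "y \<in> V - {x}" using y S(1) unfolding total_dom_set_def by blast
  then obtain t where t: "t \<in> S" "E y t" using S(1) unfolding total_dom_set_def by blast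
  have "t \<noteq> v" "t \<noteq> a" using t(1) basics by auto
  moreover have tb: "t \<noteq> b" and "t \<noteq> c"
    using t(2) y(2) adj_b[of y] adj_c[of y] adj_sym[of y] disjoint hub_outside by auto
  moreover have "t \<in> V" using t(1) S(1) unfolding total_dom_set_def by blast
  ultimately have tPQ: "t \<in> P \<or> t \<in> Q" using vertex_cases by blast
  have "distinct [c, y, t]" using t(2) y(2) tPQ hub_outside adj_irrefl by auto
  then have S_eq: "S = {c, y, t}"
    using card_le_3_eq[OF basics(4) S(2)] basics(1) y(1) t(1) by simp
  have "c \<in> V - {x}" using x vertices hub_outside by auto
  then obtain t' where "t' \<in> S" "E c t'" using S(1) unfolding total_dom_set_def by blast
  then have "t \<in> Q"
    using S_eq y(2) tb disjoint hub_outside adj_c[of t'] adj_irrefl by auto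
  with t(2) S_eq show thesis using that by blast
qed

text \<open>If such a set misses \<open>P\<close>, it is \<open>{b, c, z}\<close> for some \<open>z \<in> Q\<close>: \<open>v\<close> needs a
  neighbour in it, and \<open>a\<close> can only be dominated by \<open>b\<close>.\<close>
lemma deletion_set_missing_P:
  assumes x: "x \<in> P" and S: "total_dom_set (V - {x}) E S" "card S \<le> 3" "\<forall>s\<in>S. \<not> E x s"
    and no_P: "S \<inter> P = {}"
  obtains z where "z \<in> Q" "S = {b, c, z}"
proof -
  note basics = deletion_set_basics[OF x S(1,3)]
  have "v \<in> V - {x}" "a \<in> V - {x}" using x vertices hub_outside by auto
  then obtain z t where z: "z \<in> S" "E v z" and t: "t \<in> S" "E a t"
    using S(1) unfolding total_dom_set_def by blast
  have zQ: "z \<in> Q" using z no_P adj_v by auto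
  have "t = b" using t no_P adj_a by auto
  moreover have "distinct [b, c, z]" using zQ hub_outside hub_distinct by auto
  ultimately have "S = {b, c, z}"
    using card_le_3_eq[OF basics(4) S(2)] basics(1) t(1) z(1) by simp
  with zQ show thesis using that by blast
qed

text \<open>Combining the two cases: the deletion sets of the vertices of \<open>P\<close> yield the
  witnesses required by \<open>deletion_witnessed\<close>, as \<open>b\<close> and \<open>c\<close> dominate no vertex
  of \<open>P\<close>.\<close>
lemma deletion_witnessed: "deletion_witnessed E P Q"
  unfolding deletion_witnessed_def
proof
  fix x assume x: "x \<in> P"
  obtain S where S: "total_dom_set (V - {x}) E S" "card S \<le> 3" "\<forall>s\<in>S. \<not> E x s"
    using deletion_set[of x] x vertices by blast
  have dom_P: "\<exists>s\<in>S - {b, c}. E u s" if "u \<in> P" "u \<noteq> x" for u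
  proof -
    have "u \<in> V - {x}" using that vertices by blast
    then obtain s where "s \<in> S" "E u s" using S(1) unfolding total_dom_set_def by blast
    moreover have "\<not> E u b" "\<not> E u c"
      using that adj_b[of u] adj_c[of u] adj_sym[of u] disjoint hub_outside by auto
    ultimately show ?thesis by blast
  qed
  show "\<exists>z\<in>Q. \<not> E x z \<and> ((\<forall>u\<in>P. u \<noteq> x \<longrightarrow> E z u) \<or>
      (\<exists>y\<in>P. y \<noteq> x \<and> \<not> E x y \<and> E y z \<and> (\<forall>u\<in>P. u \<noteq> x \<longrightarrow> E y u \<or> E z u)))"
  proof (cases "S \<inter> P = {}")
    case True
    then obtain z where z: "z \<in> Q" "S = {b, c, z}" using deletion_set_missing_P[OF x S] by blast
    have "E z u" if "u \<in> P" "u \<noteq> x" for u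
      using dom_P[OF that] z adj_sym[of u z] by auto
    then show ?thesis using z S(3) by blast
  next
    case False
    then obtain y where y: "y \<in> S" "y \<in> P" by blast
    then obtain t where t: "t \<in> Q" "E y t" "S = {c, y, t}"
      using deletion_set_meeting_P[OF x S] by blast
    have "E y u \<or> E t u" if "u \<in> P" "u \<noteq> x" for u
      using dom_P[OF that] t(3) adj_sym[of u] by auto
    moreover have "y \<noteq> x" "\<not> E x y" "\<not> E x t" using y t S(3) adj_irrefl by auto
    ultimately show ?thesis using t y by blast
  qed
qed

lemma side_conditions: "side_conditions E P Q"
  unfolding side_conditions_def using misses_some edges_miss_common deletion_witnessed by blast

lemma swap: "hub_config V E v c b a Q P"
proof -
  have "hub_config_axioms V E v c b a Q P"
    using vertices adj_v adj_a adj_b adj_c disjoint hub_outside hub_distinct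
    by unfold_locales auto
  then show ?thesis by (intro hub_config.intro tc4_graph_axioms)
qed

end

lemmas side_conditions_unfolded =
  side_conditions_def misses_some_def edges_miss_common_def deletion_witnessed_def

text \<open>Each case is a propositional problem in the adjacency relation,
  decided by the SAT solver.\<close>
lemma side_conditions_small_absurd:
  fixes E :: "'a \<Rightarrow> 'a \<Rightarrow> bool"
  assumes sym: "\<And>u w. E u w = E w u" and irr: "\<And>u. \<not> E u u"
    and dist: "distinct (xs @ ws)"
    and PQ: "side_conditions E (set xs) (set ws)" and QP: "side_conditions E (set ws) (set xs)"
    and len: "length xs \<noteq> 0" "length xs \<le> length ws" "length xs + length ws \<in> {3, 5, 7}"
  shows False
proof -
  have "length xs + length ws = 3 \<or> length xs + length ws = 5 \<or> length xs + length ws = 7"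
    using len(3) by simp
  with len(1,2) have "(length xs = 1 \<and> length ws = 2) \<or> (length xs = 1 \<and> length ws = 4)
    \<or> (length xs = 1 \<and> length ws = 6) \<or> (length xs = 2 \<and> length ws = 3)
    \<or> (length xs = 2 \<and> length ws = 5) \<or> (length xs = 3 \<and> length ws = 4)"
    by presburger
  then consider
      "length xs = 1" "length ws = 2" | "length xs = 1" "length ws = 4"
    | "length xs = 1" "length ws = 6" | "length xs = 2" "length ws = 3"
    | "length xs = 2" "length ws = 5" | "length xs = 3" "length ws = 4"
    by blast
  then show False
  proof cases
    case 1
    then obtain x1 w1 w2 where xs: "xs = [x1]" and ws: "ws = [w1, w2]"
      by (auto simp: length_Suc_conv numeral_eq_Suc)
    show False using dist PQ QP unfolding xs ws side_conditions_unfolded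
      by (simp add: irr sym eq_commute[where 'a = 'a]; satx)
  next
    case 2
    then obtain x1 w1 w2 w3 w4 where xs: "xs = [x1]" and ws: "ws = [w1, w2, w3, w4]"
      by (auto simp: length_Suc_conv numeral_eq_Suc)
    show False using dist PQ QP unfolding xs ws side_conditions_unfolded
      by (simp add: irr sym eq_commute[where 'a = 'a]; satx)
  next
    case 3
    then obtain x1 w1 w2 w3 w4 w5 w6 where xs: "xs = [x1]" and ws: "ws = [w1, w2, w3, w4, w5, w6]"
      by (auto simp: length_Suc_conv numeral_eq_Suc)
    show False using dist PQ QP unfolding xs ws side_conditions_unfolded
      by (simp add: irr sym eq_commute[where 'a = 'a]; satx)
  next
    case 4
    then obtain x1 x2 w1 w2 w3 where xs: "xs = [x1, x2]" and ws: "ws = [w1, w2, w3]"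
      by (auto simp: length_Suc_conv numeral_eq_Suc)
    show False using dist PQ QP unfolding xs ws side_conditions_unfolded
      by (simp add: irr sym eq_commute[where 'a = 'a]; satx)
  next
    case 5
    then obtain x1 x2 w1 w2 w3 w4 w5 where xs: "xs = [x1, x2]" and ws: "ws = [w1, w2, w3, w4, w5]"
      by (auto simp: length_Suc_conv numeral_eq_Suc)
    show False using dist PQ QP unfolding xs ws side_conditions_unfolded
      by (simp add: irr sym eq_commute[where 'a = 'a]; satx)
  next
    case 6
    then obtain x1 x2 x3 w1 w2 w3 w4 where xs: "xs = [x1, x2, x3]" and ws: "ws = [w1, w2, w3, w4]"
      by (auto simp: length_Suc_conv numeral_eq_Suc)
    show False using dist PQ QP unfolding xs ws side_conditions_unfolded
      by (simp add: irr sym eq_commute[where 'a = 'a]; satx)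
  qed
qed

text \<open>The smaller side is nonempty, since each vertex
  of the larger side needs a witness in it.\<close>
lemma side_conditions_odd_absurd:
  fixes E :: "'a \<Rightarrow> 'a \<Rightarrow> bool"
  assumes sym: "\<And>u w. E u w = E w u" and irr: "\<And>u. \<not> E u u"
    and fin: "finite P" "finite Q" and disj: "P \<inter> Q = {}"
    and PQ: "side_conditions E P Q" and QP: "side_conditions E Q P"
    and odd: "card P + card Q \<in> {3, 5, 7}"
  shows False
proof -
  have absurd: False
    if fX: "finite X" and fY: "finite Y" and dXY: "X \<inter> Y = {}"
      and XY: "side_conditions E X Y" and YX: "side_conditions E Y X"
      and le: "card X \<le> card Y" and odd': "card X + card Y \<in> {3, 5, 7}" for X Y
  proof -
    obtain xs ws where xs: "set xs = X" "distinct xs" and ws: "set ws = Y" "distinct ws"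
      using finite_distinct_list fX fY by metis
    have "Y \<noteq> {}" using fY le odd' by auto
    then have "X \<noteq> {}"
      using YX unfolding side_conditions_def deletion_witnessed_def by auto
    then have "card X \<noteq> 0" using fX by simp
    moreover have "length xs = card X" "length ws = card Y"
      using xs ws distinct_card by metis+
    moreover have "distinct (xs @ ws)" using xs ws dXY by auto
    ultimately show False
      using side_conditions_small_absurd[where E = E, OF sym irr, of xs ws] XY YX xs ws le odd'
      by simp
  qed
  show False
  proof (cases "card P \<le> card Q")
    case True
    then show False using absurd[OF fin disj PQ QP _ odd] by blast
  next
    case False
    then show False
      using absurd[of Q P] fin disj PQ QP odd by (auto simp: Int_commute add.commute)
  qed
qed

theorem mainTheorem5:
  fixes V :: "'a set" and E :: "'a \<Rightarrow> 'a \<Rightarrow> bool"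
  assumes "simple_graph V E"
    and "V \<noteq> {}"
    and "m_gamma_t_critical 4 V E"
    and "card V = max_deg V E + 4"
    and "max_deg V E \<in> {3, 5, 7}"
    and "min_deg V E \<ge> 2"
  shows False
proof -
  have fin: "finite V" using assms(1) unfolding simple_graph_def by blast
  interpret tc4_graph V E
  proof
    show "4 \<le> card S" if "total_dom_set V E S" for S
      using gamma_t_le_card[OF that] assms(3) unfolding m_gamma_t_critical_def by simp
    show "\<exists>S. total_dom_set (V - {x}) E S \<and> card S \<le> 3" if "x \<in> V" for x
      using critical_vertex_deletion[OF assms(3) fin assms(6) that] by fastforce
  qed fact
  obtain v where v: "v \<in> V" "deg V E v = max_deg V E"
    using max_deg_attained[OF fin assms(2)] by blast
  then have "nbhd V E v \<noteq> {}" using assms(5) unfolding deg_def by auto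
  then obtain a b c P Q where hub: "hub_config V E v a b c P Q" and N: "P \<union> Q = nbhd V E v"
    using hub_decomposition[OF v(1)] v(2) assms(4) by metis
  have "finite (P \<union> Q)" using N fin unfolding nbhd_def by simp
  then have "finite P" "finite Q" by simp_all
  then have "card P + card Q \<in> {3, 5, 7}"
    using N v(2) assms(5) hub_config.disjoint[OF hub] card_Un_disjoint unfolding deg_def by metis
  then show False
    using side_conditions_odd_absurd[where E = E, OF adj_sym adj_irrefl] \<open>finite P\<close> \<open>finite Q\<close>
      hub_config.disjoint[OF hub] hub_config.side_conditions[OF hub]
      hub_config.side_conditions[OF hub_config.swap[OF hub]] by blast
qed

end
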